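(* Let $n\ge 64$ be a power of $2$ and let $z\in\mathbb{R}^n$ satisfy $\sum_{i}z(i)=0$ and $\|z\|_1=2$, so that $\sum_i z^+(i)=1$. Suppose $$\sum_{j = 1}^{\log (n/32)} \sum_{i \in B_j(z^+)} z^+(i) \geq \frac35 .$$ Let $j$ be chosen uniformly at random from $\{1,\dots,\log(n/32)\}$, let $r=2^j$, and let $S\subseteq[n]$ include each element independently with probability $1/r$. Then with probability at least $\frac{3}{20\log(n/32)}$ there exists $i\in S$ with $z^+(i)\geq 1/r$.
   Context: $z^+(i)=\max(0,z(i))$. For a nonnegative vector $x\in\mathbb{R}^n$ and integer $j\ge1$, the $j$-th bin is $B_j(x)=\{i: 2^{-j}\le x(i)<2^{-j+1}\}$. $\log$ is base 2. *)

theory Defs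
  imports "HOL-Probability.Probability"
begin

text \<open>Vectors in R^n are functions nat => real on the index set {1..n}.\<close>

definition pos_part :: "(nat \<Rightarrow> real) \<Rightarrow> nat \<Rightarrow> real" where
  "pos_part z i = max 0 (z i)"

definition bin :: "nat \<Rightarrow> (nat \<Rightarrow> real) \<Rightarrow> nat \<Rightarrow> nat set" where
  "bin n x j = {i \<in> {1..n}. 2 powr (- real j) \<le> x i \<and> x i < 2 powr (- real j + 1)}"

definition random_subset :: "nat \<Rightarrow> real \<Rightarrow> nat set pmf" where
  "random_subset n p = map_pmf (\<lambda>f. {i \<in> {1..n}. f i}) (Pi_pmf {1..n} False (\<lambda>_. bernoulli_pmf p))"

definition sampling_experiment :: "nat \<Rightarrow> nat \<Rightarrow> (nat \<times> nat set) pmf" where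
  "sampling_experiment n L =
     bind_pmf (pmf_of_set {1..L}) (\<lambda>j.
       map_pmf (\<lambda>S. (j, S)) (random_subset n (1 / 2 ^ j)))"

end

theory Submission
  imports Defs
begin

text \<open>At scale \<open>j\<close> the bin \<open>B\<^sub>j(z\<^sup>+)\<close> holds mass \<open>w\<^sub>j\<close> with \<open>w\<^sub>j < 2 |B\<^sub>j| / 2\<^sup>j\<close>, so a
  random subset of rate \<open>2\<^sup>-\<^sup>j\<close> misses it with probability \<open>(1 - 2\<^sup>-\<^sup>j)\<^bsup>|B\<^sub>j|\<^esup> \<le> 1 / (1 + |B\<^sub>j| 2\<^sup>-\<^sup>j)\<close>;
  since also \<open>w\<^sub>j \<le> 1\<close>, it hits the bin with probability at least \<open>w\<^sub>j / 3\<close>. Averaging over the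
  \<open>L = \<lfloor>log (n/32)\<rfloor>\<close> scales gives at least \<open>(\<Sum>\<^sub>j w\<^sub>j) / (3L) \<ge> 1 / (5L)\<close>.\<close>

lemma measure_bind_pmf:
  "measure_pmf.prob (bind_pmf M f) X = measure_pmf.expectation M (\<lambda>x. measure_pmf.prob (f x) X)"
  unfolding measure_pmf_bind
  by (rule measure_pmf.measure_bind[where N="count_space UNIV"])
     (auto simp: measurable_def space_subprob_algebra prob_space_imp_subprob_space
                 measure_pmf.prob_space_axioms)

lemma prob_random_subset_disjoint:
  assumes "B \<subseteq> {1..n}" "0 \<le> p" "p \<le> 1"
  shows "measure_pmf.prob (random_subset n p) {S. S \<inter> B = {}} = (1 - p) ^ card B"
proof -
  have "measure_pmf.prob (random_subset n p) {S. S \<inter> B = {}}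
     = measure_pmf.prob (Pi_pmf {1..n} False (\<lambda>_. bernoulli_pmf p))
          (Pi {1..n} (\<lambda>i. if i \<in> B then {False} else UNIV))"
    unfolding random_subset_def measure_map_pmf
    by (rule arg_cong[where f="measure_pmf.prob _"]) (use assms(1) in \<open>auto simp: Pi_def\<close>)
  also have "\<dots> = (\<Prod>i\<in>{1..n}. measure_pmf.prob (bernoulli_pmf p) (if i \<in> B then {False} else UNIV))"
    by (rule measure_Pi_pmf_Pi) simp
  also have "\<dots> = (\<Prod>i\<in>{1..n}. if i \<in> B then 1 - p else 1)"
    by (rule prod.cong) (use assms in \<open>auto simp: measure_pmf_single\<close>)
  also have "\<dots> = (\<Prod>i\<in>B. 1 - p)"
    using assms(1) by (subst prod.If_cases) (simp_all add: Int_absorb1)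
  finally show ?thesis by simp
qed

lemma prob_random_subset_meets:
  assumes "B \<subseteq> {1..n}" "0 \<le> p" "p \<le> 1"
  shows "measure_pmf.prob (random_subset n p) {S. S \<inter> B \<noteq> {}} = 1 - (1 - p) ^ card B"
proof -
  have "{S. S \<inter> B \<noteq> {}} = UNIV - {S. S \<inter> B = {}}" by auto
  then show ?thesis
    using measure_pmf.prob_compl[of "{S. S \<inter> B = {}}" "random_subset n p"]
          prob_random_subset_disjoint[OF assms] by simp
qed

lemma one_minus_power_mult_le_one:
  fixes p :: real
  assumes "0 \<le> p" "p \<le> 1"
  shows "(1 - p) ^ m * (1 + m * p) \<le> 1"
proof (induction m)
  case 0
  then show ?case by simp
next
  case (Suc m)
  have step: "(1 - p) * (1 + (m + 1) * p) \<le> 1 + m * p"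
    using assms by (simp add: algebra_simps)
  have "(1 - p) ^ Suc m * (1 + real (Suc m) * p) = (1 - p) ^ m * ((1 - p) * (1 + (m + 1) * p))"
    by (simp add: algebra_simps)
  also have "\<dots> \<le> (1 - p) ^ m * (1 + m * p)"
    using step assms by (intro mult_left_mono) auto
  finally show ?case using Suc by linarith
qed

lemma one_minus_power_ge_third:
  fixes w p :: real
  assumes "0 \<le> p" "p \<le> 1" "w \<le> 2 * (m * p)" "w \<le> 1"
  shows "w / 3 \<le> 1 - (1 - p) ^ m"
proof -
  define x where "x = m * p"
  have "x \<ge> 0" using assms by (simp add: x_def)
  have "w * x \<le> 1 * x" using assms(4) \<open>x \<ge> 0\<close> by (rule mult_right_mono)
  then have "w * (1 + x) \<le> 3 * x" using assms(3) by (simp add: x_def algebra_simps)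
  then have "w / 3 \<le> x / (1 + x)" using \<open>x \<ge> 0\<close> by (simp add: field_simps)
  also have "x / (1 + x) \<le> 1 - (1 - p) ^ m"
    using one_minus_power_mult_le_one[OF assms(1,2), of m] \<open>x \<ge> 0\<close>
    by (simp add: x_def field_simps)
  finally show ?thesis .
qed

lemma sum_pos_part:
  "(\<Sum>i\<in>A. pos_part z i) = ((\<Sum>i\<in>A. z i) + (\<Sum>i\<in>A. \<bar>z i\<bar>)) / 2"
proof -
  have "(\<Sum>i\<in>A. pos_part z i) = (\<Sum>i\<in>A. (z i + \<bar>z i\<bar>) / 2)"
    by (rule sum.cong) (simp_all add: pos_part_def max_def)
  then show ?thesis by (simp add: sum_divide_distrib[symmetric] sum.distrib)
qed

lemma bin_subset: "bin n x j \<subseteq> {1..n}"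
  by (auto simp: bin_def)

lemma sum_bin_le: "(\<Sum>i\<in>bin n x j. x i) \<le> 2 * (card (bin n x j) * (1 / 2 ^ j))"
proof -
  have "(\<Sum>i\<in>bin n x j. x i) \<le> (\<Sum>i\<in>bin n x j. 2 powr (- real j + 1))"
    by (rule sum_mono) (auto simp: bin_def)
  also have "2 powr (- real j + 1) = 2 / 2 ^ j"
    using powr_diff[of 2 1 "real j"] by (simp add: powr_realpow)
  finally show ?thesis by (simp add: field_simps)
qed

lemma prob_random_subset_hits_bin:
  assumes nonneg: "\<And>i. 0 \<le> x i" and mass: "(\<Sum>i\<in>{1..n}. x i) \<le> 1"
  shows "(\<Sum>i\<in>bin n x j. x i) / 3
           \<le> measure_pmf.prob (random_subset n (1 / 2 ^ j)) {S. \<exists>i\<in>S. x i \<ge> 1 / 2 ^ j}"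
proof -
  let ?B = "bin n x j" and ?p = "1 / 2 ^ j :: real"
  have p: "0 \<le> ?p" "?p \<le> 1" by auto
  have "(\<Sum>i\<in>?B. x i) \<le> (\<Sum>i\<in>{1..n}. x i)"
    using bin_subset nonneg by (intro sum_mono2) auto
  then have "(\<Sum>i\<in>?B. x i) / 3 \<le> 1 - (1 - ?p) ^ card ?B"
    using mass by (intro one_minus_power_ge_third[OF p sum_bin_le]) simp
  also have "\<dots> = measure_pmf.prob (random_subset n ?p) {S. S \<inter> ?B \<noteq> {}}"
    by (rule prob_random_subset_meets[OF bin_subset p, symmetric])
  also have "\<dots> \<le> measure_pmf.prob (random_subset n ?p) {S. \<exists>i\<in>S. x i \<ge> ?p}"
    by (rule measure_pmf.finite_measure_mono)
       (auto simp: bin_def powr_minus powr_realpow divide_inverse)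
  finally show ?thesis .
qed

lemma prob_sampling_experiment:
  assumes "L \<ge> 1"
  shows "measure_pmf.prob (sampling_experiment n L) {(j, S). Q j S}
           = (\<Sum>j\<in>{1..L}. measure_pmf.prob (random_subset n (1 / 2 ^ j)) {S. Q j S}) / L"
  unfolding sampling_experiment_def measure_bind_pmf
  using assms by (subst integral_pmf_of_set) (auto simp: vimage_def)

theorem lemma4p3:
  fixes n k :: nat and z :: "nat \<Rightarrow> real"
  assumes "n = 2 ^ k" and "n \<ge> 64"
    and "(\<Sum>i\<in>{1..n}. z i) = 0"
    and "(\<Sum>i\<in>{1..n}. \<bar>z i\<bar>) = 2"
    and "(\<Sum>j\<in>{1..nat \<lfloor>log 2 (real n / 32)\<rfloor>}. \<Sum>i\<in>bin n (pos_part z) j. pos_part z i) \<ge> 3 / 5"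
  shows "measure_pmf.prob (sampling_experiment n (nat \<lfloor>log 2 (real n / 32)\<rfloor>))
           {(j, S). \<exists>i\<in>S. pos_part z i \<ge> 1 / 2 ^ j}
         \<ge> 3 / (20 * log 2 (real n / 32))"
proof -
  define \<Lambda> where "\<Lambda> = log 2 (real n / 32)"
  define L where "L = nat \<lfloor>\<Lambda>\<rfloor>"
  have "\<Lambda> \<ge> 1"
    using assms(2) by (simp add: \<Lambda>_def le_log_iff)
  then have "L \<ge> 1" "real L \<le> \<Lambda>" by (simp_all add: L_def le_nat_floor)
  have nonneg: "\<And>i. 0 \<le> pos_part z i" by (simp add: pos_part_def)
  have mass: "(\<Sum>i\<in>{1..n}. pos_part z i) \<le> 1"
    using assms(3,4) by (simp add: sum_pos_part)
  have "3 / (20 * \<Lambda>) \<le> 3 / 5 / 3 / L"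
    using \<open>L \<ge> 1\<close> \<open>real L \<le> \<Lambda>\<close> by (simp add: field_simps)
  also have "\<dots> \<le> (\<Sum>j\<in>{1..L}. (\<Sum>i\<in>bin n (pos_part z) j. pos_part z i) / 3) / L"
    using assms(5) unfolding L_def \<Lambda>_def sum_divide_distrib[symmetric]
    by (intro divide_right_mono) auto
  also have "\<dots> \<le> (\<Sum>j\<in>{1..L}. measure_pmf.prob (random_subset n (1 / 2 ^ j))
                      {S. \<exists>i\<in>S. pos_part z i \<ge> 1 / 2 ^ j}) / L"
    using prob_random_subset_hits_bin[OF nonneg mass] by (intro divide_right_mono sum_mono) simp_all
  also have "\<dots> = measure_pmf.prob (sampling_experiment n L)
                    {(j, S). \<exists>i\<in>S. pos_part z i \<ge> 1 / 2 ^ j}"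
    by (rule prob_sampling_experiment[OF \<open>L \<ge> 1\<close>, symmetric])
  finally show ?thesis by (simp add: L_def \<Lambda>_def)
qed

end
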